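(* Let $\mathbb K$ be a field of characteristic zero and $A=\bigoplus_{i=1}^k M_{d_i}(\mathbb K)$. Then every weakly symmetric Frobenius structure on $A$ has integral F-dimension $$\dim_1(A)=\sum_{i\in I}d_i^2\le\dim(A),$$ where $I\subseteq\{1,\dots,k\}$ is some subset containing every $i$ with $d_i=1$. Such a weakly symmetric structure is obtained by twisting the standard special form $\epsilon_0=\bigoplus_i d_i\mathrm{Tr}_{M_{d_i}}$ by $u=\bigoplus_iu_i$ (i.e. $(a,b)=\epsilon_0(uab)$) with $\mathrm{Tr}(u_i^{-1})=0$ for $i\notin I$ and $u_i=\mu_i^{-1}I_{d_i}$ for $i\in I$, for some nonzero $\mu_i\in\mathbb K$; its F-Hilbert series is then $$\dim_x(A)=\sum_{i\in I}\frac{d_i^2\mu_i^{-1}}{1-\mu_ix}.$$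
   Context: A Frobenius algebra is a unital $\mathbb K$-algebra $A$ with a bilinear form $(\ ,\ )$ satisfying $(ab,c)=(a,bc)$ whose induced map $A\to A^*$ is invertible; its inverse is $g=\sum g^1\otimes g^2\in A\otimes A$ with $\sum (a,g^1)g^2=a=\sum g^1(g^2,a)$. Write $\epsilon(a):=(1,a)$ and $\ell:=\sum g^1g^2$ (central). F-dimensions: $\dim_j(A):=\epsilon(\ell^j)$, $\dim_x(A):=\sum_{j\ge0}x^j\dim_j(A)$. The structure is weakly symmetric if the linear map $a\mapsto\epsilon(\ell a)$ vanishes on all commutators $ab-ba$. Every Frobenius structure on $A$ is of the form $(a,b)=\epsilon_0(uab)$ for an invertible $u\in A$.
   Formalization: The constant coefficient $\dim_0(A)$ of the F-Hilbert series is $\sum_{i\in I}d_i^2\mu_i^{-1}+\sum_{i\notin I}d_i\mathrm{Tr}(u_i)$, not $\sum_{i\in I}d_i^2\mu_i^{-1}$; the displayed series gives only the coefficients of $x^j$ with $j\ge1$. The statement above fails without it. *)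

theory Defs
  imports "Jordan_Normal_Form.Matrix"
begin

text \<open>An element is a
  family of matrices a :: nat => 'a mat with a i a (d i) x (d i) matrix for
  i in {1..k} and a i = the empty 0 x 0 matrix otherwise.\<close>

definition mtrace :: "'a::comm_ring_1 mat \<Rightarrow> 'a" where
  "mtrace M = (\<Sum>j<dim_row M. M $$ (j, j))"

definition dsA :: "nat \<Rightarrow> (nat \<Rightarrow> nat) \<Rightarrow> (nat \<Rightarrow> 'a::comm_ring_1 mat) set" where
  "dsA k d = {a. (\<forall>i\<in>{1..k}. a i \<in> carrier_mat (d i) (d i)) \<and> (\<forall>i. i \<notin> {1..k} \<longrightarrow> a i = 0\<^sub>m 0 0)}"

definition dsMult :: "nat \<Rightarrow> (nat \<Rightarrow> 'a::comm_ring_1 mat) \<Rightarrow> (nat \<Rightarrow> 'a mat) \<Rightarrow> (nat \<Rightarrow> 'a mat)" where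
  "dsMult k a b = (\<lambda>i. if i \<in> {1..k} then a i * b i else 0\<^sub>m 0 0)"

definition dsAdd :: "nat \<Rightarrow> (nat \<Rightarrow> 'a::comm_ring_1 mat) \<Rightarrow> (nat \<Rightarrow> 'a mat) \<Rightarrow> (nat \<Rightarrow> 'a mat)" where
  "dsAdd k a b = (\<lambda>i. if i \<in> {1..k} then a i + b i else 0\<^sub>m 0 0)"

definition dsMinus :: "nat \<Rightarrow> (nat \<Rightarrow> 'a::comm_ring_1 mat) \<Rightarrow> (nat \<Rightarrow> 'a mat) \<Rightarrow> (nat \<Rightarrow> 'a mat)" where
  "dsMinus k a b = (\<lambda>i. if i \<in> {1..k} then a i - b i else 0\<^sub>m 0 0)"

definition dsSmult :: "nat \<Rightarrow> 'a::comm_ring_1 \<Rightarrow> (nat \<Rightarrow> 'a mat) \<Rightarrow> (nat \<Rightarrow> 'a mat)" where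
  "dsSmult k c a = (\<lambda>i. if i \<in> {1..k} then c \<cdot>\<^sub>m a i else 0\<^sub>m 0 0)"

definition dsOne :: "nat \<Rightarrow> (nat \<Rightarrow> nat) \<Rightarrow> (nat \<Rightarrow> 'a::comm_ring_1 mat)" where
  "dsOne k d = (\<lambda>i. if i \<in> {1..k} then 1\<^sub>m (d i) else 0\<^sub>m 0 0)"

definition dsPow :: "nat \<Rightarrow> (nat \<Rightarrow> 'a::comm_ring_1 mat) \<Rightarrow> nat \<Rightarrow> (nat \<Rightarrow> 'a mat)" where
  "dsPow k a n = (\<lambda>i. if i \<in> {1..k} then a i ^\<^sub>m n else 0\<^sub>m 0 0)"

definition dsLinear :: "nat \<Rightarrow> (nat \<Rightarrow> nat) \<Rightarrow> ((nat \<Rightarrow> 'a::comm_ring_1 mat) \<Rightarrow> 'a) \<Rightarrow> bool" where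
  "dsLinear k d \<phi> \<longleftrightarrow>
     (\<forall>a\<in>dsA k d. \<forall>b\<in>dsA k d. \<phi> (dsAdd k a b) = \<phi> a + \<phi> b) \<and>
     (\<forall>c. \<forall>a\<in>dsA k d. \<phi> (dsSmult k c a) = c * \<phi> a)"

definition frobenius_form :: "nat \<Rightarrow> (nat \<Rightarrow> nat) \<Rightarrow>
    ((nat \<Rightarrow> 'a::comm_ring_1 mat) \<Rightarrow> (nat \<Rightarrow> 'a mat) \<Rightarrow> 'a) \<Rightarrow> bool" where
  "frobenius_form k d B \<longleftrightarrow>
     (\<forall>a\<in>dsA k d. dsLinear k d (B a)) \<and>
     (\<forall>b\<in>dsA k d. dsLinear k d (\<lambda>a. B a b)) \<and>
     (\<forall>a\<in>dsA k d. \<forall>b\<in>dsA k d. \<forall>c\<in>dsA k d. B (dsMult k a b) c = B a (dsMult k b c)) \<and>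
     (\<forall>\<phi>. dsLinear k d \<phi> \<longrightarrow> (\<exists>!a. a \<in> dsA k d \<and> (\<forall>b\<in>dsA k d. B a b = \<phi> b)))"

definition dsSum :: "nat \<Rightarrow> (nat \<Rightarrow> nat) \<Rightarrow> (nat \<Rightarrow> 'a::comm_ring_1 mat) list \<Rightarrow> (nat \<Rightarrow> 'a mat)" where
  "dsSum k d xs = foldr (dsAdd k) xs (dsSmult k 0 (dsOne k d))"

text \<open>A representation of the copairing g = sum g^1 (x) g^2 in A (x) A, as a finite
  list of pairs (g^1, g^2).\<close>
definition is_copairing :: "nat \<Rightarrow> (nat \<Rightarrow> nat) \<Rightarrow>
    ((nat \<Rightarrow> 'a::comm_ring_1 mat) \<Rightarrow> (nat \<Rightarrow> 'a mat) \<Rightarrow> 'a) \<Rightarrow>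
    ((nat \<Rightarrow> 'a mat) \<times> (nat \<Rightarrow> 'a mat)) list \<Rightarrow> bool" where
  "is_copairing k d B gs \<longleftrightarrow>
     (\<forall>p\<in>set gs. fst p \<in> dsA k d \<and> snd p \<in> dsA k d) \<and>
     (\<forall>a\<in>dsA k d.
        dsSum k d (map (\<lambda>p. dsSmult k (B a (fst p)) (snd p)) gs) = a \<and>
        dsSum k d (map (\<lambda>p. dsSmult k (B (snd p) a) (fst p)) gs) = a)"

definition frob_eps :: "nat \<Rightarrow> (nat \<Rightarrow> nat) \<Rightarrow>
    ((nat \<Rightarrow> 'a::comm_ring_1 mat) \<Rightarrow> (nat \<Rightarrow> 'a mat) \<Rightarrow> 'a) \<Rightarrow> (nat \<Rightarrow> 'a mat) \<Rightarrow> 'a" where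
  "frob_eps k d B a = B (dsOne k d) a"

text \<open>ell = sum g^1 g^2 (independent of the chosen representation of g).\<close>
definition frob_ell :: "nat \<Rightarrow> (nat \<Rightarrow> nat) \<Rightarrow>
    ((nat \<Rightarrow> 'a::comm_ring_1 mat) \<Rightarrow> (nat \<Rightarrow> 'a mat) \<Rightarrow> 'a) \<Rightarrow> (nat \<Rightarrow> 'a mat)" where
  "frob_ell k d B = (let gs = (SOME gs. is_copairing k d B gs)
                     in dsSum k d (map (\<lambda>p. dsMult k (fst p) (snd p)) gs))"

definition frob_dim :: "nat \<Rightarrow> (nat \<Rightarrow> nat) \<Rightarrow>
    ((nat \<Rightarrow> 'a::comm_ring_1 mat) \<Rightarrow> (nat \<Rightarrow> 'a mat) \<Rightarrow> 'a) \<Rightarrow> nat \<Rightarrow> 'a" where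
  "frob_dim k d B j = frob_eps k d B (dsPow k (frob_ell k d B) j)"

definition weakly_symmetric :: "nat \<Rightarrow> (nat \<Rightarrow> nat) \<Rightarrow>
    ((nat \<Rightarrow> 'a::comm_ring_1 mat) \<Rightarrow> (nat \<Rightarrow> 'a mat) \<Rightarrow> 'a) \<Rightarrow> bool" where
  "weakly_symmetric k d B \<longleftrightarrow>
     (\<forall>a\<in>dsA k d. \<forall>b\<in>dsA k d.
        frob_eps k d B (dsMult k (frob_ell k d B) (dsMinus k (dsMult k a b) (dsMult k b a))) = 0)"

definition eps0 :: "nat \<Rightarrow> (nat \<Rightarrow> nat) \<Rightarrow> (nat \<Rightarrow> 'a::comm_ring_1 mat) \<Rightarrow> 'a" where
  "eps0 k d a = (\<Sum>i\<in>{1..k}. of_nat (d i) * mtrace (a i))"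

end

theory Submission
  imports Defs "Jordan_Normal_Form.Determinant"
begin

text \<open>Every linear form on \<open>A\<close> is \<open>\<epsilon>\<^sub>0(u \<cdot> _)\<close> for a unique \<open>u\<close>, so
  \<open>(a,b) = \<epsilon>\<^sub>0(u a b)\<close>, and nondegeneracy makes \<open>u\<close> invertible: its inverse \<open>v\<close> is the
  element representing \<open>\<epsilon>\<^sub>0\<close>. The matrix units \<open>E\<^sub>j\<^sub>l\<close> of the block \<open>i\<close> have the
  dual basis \<open>d\<^sub>i\<^sup>-\<^sup>1 v E\<^sub>l\<^sub>j\<close>, and from the copairing identities one computes, for any
  representation of the copairing, \<open>\<ell>\<^sub>i = (Tr v\<^sub>i / d\<^sub>i) 1\<close>. Hence
  \<open>dim\<^sub>n(A) = \<Sum>\<^sub>i d\<^sub>i (Tr v\<^sub>i / d\<^sub>i)\<^sup>n Tr u\<^sub>i\<close>. Weak symmetry, tested on commutators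
  of matrix units, forces \<open>u\<^sub>i\<close> to be scalar, \<open>u\<^sub>i = \<mu>\<^sub>i\<^sup>-\<^sup>1 1\<close>, on every block \<open>i \<in> I\<close>
  where \<open>Tr v\<^sub>i \<noteq> 0\<close>; then \<open>v\<^sub>i = \<mu>\<^sub>i 1\<close> and the block contributes
  \<open>d\<^sub>i\<^sup>2 \<mu>\<^sub>i\<^sup>-\<^sup>1 \<mu>\<^sub>i\<^sup>n\<close>, while the other blocks only contribute to \<open>dim\<^sub>0\<close>. A block of
  size 1 lies in \<open>I\<close> because there \<open>Tr v\<^sub>i = v\<^sub>i = u\<^sub>i\<^sup>-\<^sup>1\<close>.\<close>

section \<open>Matrix units and the trace form \<open>\<epsilon>\<^sub>0\<close>\<close>

definition mat_unit :: "nat \<Rightarrow> nat \<Rightarrow> nat \<Rightarrow> 'a::comm_ring_1 mat" where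
  "mat_unit n j l = mat n n (\<lambda>(r,s). if r = j \<and> s = l then 1 else 0)"

definition ds_unit :: "nat \<Rightarrow> (nat \<Rightarrow> nat) \<Rightarrow> nat \<Rightarrow> nat \<Rightarrow> nat \<Rightarrow> nat \<Rightarrow> 'a::comm_ring_1 mat" where
  "ds_unit k d i j l =
     (\<lambda>i'. if i' \<in> {1..k} then (if i' = i then mat_unit (d i) j l else 0\<^sub>m (d i') (d i')) else 0\<^sub>m 0 0)"

definition ds_index :: "nat \<Rightarrow> (nat \<Rightarrow> nat) \<Rightarrow> (nat \<times> nat \<times> nat) set" where
  "ds_index k d = (SIGMA i:{1..k}. {..<d i} \<times> {..<d i})"

lemma sum_list_map_sum: "(\<Sum>x\<leftarrow>xs. \<Sum>t\<in>S. f x t) = (\<Sum>t\<in>S. \<Sum>x\<leftarrow>xs. f x t)"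
  by (induction xs) (simp_all add: sum.distrib)

context
  fixes k :: nat and d :: "nat \<Rightarrow> nat"
begin

lemma dsA_I:
  assumes "\<And>i. i \<in> {1..k} \<Longrightarrow> a i \<in> carrier_mat (d i) (d i)"
    and "\<And>i. i \<notin> {1..k} \<Longrightarrow> a i = 0\<^sub>m 0 0"
  shows "a \<in> dsA k d"
  using assms unfolding dsA_def by auto

lemma dsA_D:
  assumes "a \<in> dsA k d"
  shows "i \<in> {1..k} \<Longrightarrow> a i \<in> carrier_mat (d i) (d i)"
    and "i \<notin> {1..k} \<Longrightarrow> a i = 0\<^sub>m 0 0"
  using assms unfolding dsA_def by auto

lemma dsA_dims:
  assumes "a \<in> dsA k d" "i \<in> {1..k}"
  shows "dim_row (a i) = d i" "dim_col (a i) = d i"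
  using dsA_D(1)[OF assms] by auto

lemma dsA_eqI:
  assumes a: "a \<in> dsA k d" and b: "b \<in> dsA k d"
    and "\<And>i r s. i \<in> {1..k} \<Longrightarrow> r < d i \<Longrightarrow> s < d i \<Longrightarrow> a i $$ (r,s) = b i $$ (r,s)"
  shows "a = b"
proof
  fix i
  show "a i = b i"
  proof (cases "i \<in> {1..k}")
    case True
    show ?thesis
      by (rule eq_matI) (use assms True dsA_dims[OF a True] dsA_dims[OF b True] in auto)
  qed (use dsA_D(2)[OF a] dsA_D(2)[OF b] in simp)
qed

lemma dsMult_closed:
  assumes "a \<in> dsA k d" "b \<in> dsA k d"
  shows "dsMult k a b \<in> dsA k d"
  by (rule dsA_I) (auto simp add: dsMult_def mult_carrier_mat[OF dsA_D(1)[OF assms(1)] dsA_D(1)[OF assms(2)]])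

lemma dsAdd_closed: "a \<in> dsA k d \<Longrightarrow> b \<in> dsA k d \<Longrightarrow> dsAdd k a b \<in> dsA k d"
  by (rule dsA_I) (auto simp: dsAdd_def dest: dsA_D)

lemma dsMinus_closed: "a \<in> dsA k d \<Longrightarrow> b \<in> dsA k d \<Longrightarrow> dsMinus k a b \<in> dsA k d"
  by (rule dsA_I) (auto simp: dsMinus_def dest: dsA_D intro: minus_carrier_mat)

lemma dsSmult_closed: "a \<in> dsA k d \<Longrightarrow> dsSmult k c a \<in> dsA k d"
  by (rule dsA_I) (auto simp: dsSmult_def dest: dsA_D)

lemma dsPow_closed: "a \<in> dsA k d \<Longrightarrow> dsPow k a n \<in> dsA k d"
  by (rule dsA_I) (auto simp: dsPow_def dest: dsA_D)

lemma dsOne_closed: "dsOne k d \<in> dsA k d"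
  by (rule dsA_I) (auto simp: dsOne_def)

lemma ds_unit_closed: "ds_unit k d i j l \<in> dsA k d"
  by (rule dsA_I) (auto simp: ds_unit_def mat_unit_def)

lemma dsSum_closed: "set ys \<subseteq> dsA k d \<Longrightarrow> dsSum k d ys \<in> dsA k d"
  unfolding dsSum_def by (induction ys) (auto intro: dsAdd_closed dsSmult_closed dsOne_closed)

lemma dsMult_entry:
  assumes "a \<in> dsA k d" "b \<in> dsA k d" "i \<in> {1..k}" "r < d i" "s < d i"
  shows "dsMult k a b i $$ (r,s) = (\<Sum>t<d i. a i $$ (r,t) * b i $$ (t,s))"
  using assms dsA_dims[OF assms(1,3)] dsA_dims[OF assms(2,3)]
  by (simp add: dsMult_def scalar_prod_def lessThan_atLeast0 ac_simps)

lemma dsAdd_entry: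
  assumes "a \<in> dsA k d" "b \<in> dsA k d" "i \<in> {1..k}" "r < d i" "s < d i"
  shows "dsAdd k a b i $$ (r,s) = a i $$ (r,s) + b i $$ (r,s)"
  using assms dsA_dims[OF assms(1,3)] dsA_dims[OF assms(2,3)] by (simp add: dsAdd_def)

lemma dsMinus_entry:
  assumes "a \<in> dsA k d" "b \<in> dsA k d" "i \<in> {1..k}" "r < d i" "s < d i"
  shows "dsMinus k a b i $$ (r,s) = a i $$ (r,s) - b i $$ (r,s)"
  using assms dsA_dims[OF assms(1,3)] dsA_dims[OF assms(2,3)] by (simp add: dsMinus_def)

lemma dsSmult_entry:
  assumes "a \<in> dsA k d" "i \<in> {1..k}" "r < d i" "s < d i"
  shows "dsSmult k c a i $$ (r,s) = c * a i $$ (r,s)"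
  using assms dsA_dims[OF assms(1,2)] by (simp add: dsSmult_def)

lemma ds_unit_entry:
  assumes "i \<in> {1..k}" "r < d i" "s < d i"
  shows "ds_unit k d i' j l i $$ (r,s) = (if i' = i \<and> j = r \<and> l = s then 1 else 0)"
  using assms by (auto simp: ds_unit_def mat_unit_def)

lemma dsSum_entry:
  assumes "set ys \<subseteq> dsA k d" "i \<in> {1..k}" "r < d i" "s < d i"
  shows "dsSum k d ys i $$ (r,s) = (\<Sum>y\<leftarrow>ys. y i $$ (r,s))"
  using assms(1)
proof (induction ys)
  case Nil
  then show ?case using assms(2-4) dsSmult_entry[OF dsOne_closed, of i r s 0]
    by (simp add: dsSum_def)
next
  case (Cons y ys)
  then show ?case using assms(2-4) dsAdd_entry[of y "dsSum k d ys" i r s] dsSum_closed[of ys]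
    by (simp add: dsSum_def)
qed

lemma dsMult_assoc:
  assumes "a \<in> dsA k d" "b \<in> dsA k d" "c \<in> dsA k d"
  shows "dsMult k (dsMult k a b) c = dsMult k a (dsMult k b c)"
  using assoc_mult_mat[OF dsA_D(1)[OF assms(1)] dsA_D(1)[OF assms(2)] dsA_D(1)[OF assms(3)]]
  by (auto simp: dsMult_def)

lemma dsMult_one_left: "a \<in> dsA k d \<Longrightarrow> dsMult k (dsOne k d) a = a"
  by (rule ext) (auto simp: dsMult_def dsOne_def dest: dsA_D)

lemma dsMult_one_right: "a \<in> dsA k d \<Longrightarrow> dsMult k a (dsOne k d) = a"
  by (rule ext) (auto simp: dsMult_def dsOne_def dest: dsA_D)

lemma dsMult_unit_entry:
  assumes c: "c \<in> dsA k d" and i: "i \<in> {1..k}" and r: "r < d i" and s: "s < d i" and l: "l < d i'"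
  shows "dsMult k c (ds_unit k d i' l j) i $$ (r,s) = (if i' = i \<and> s = j then c i $$ (r,l) else 0)"
proof -
  have "dsMult k c (ds_unit k d i' l j) i $$ (r,s) = (\<Sum>t<d i. c i $$ (r,t) * ds_unit k d i' l j i $$ (t,s))"
    by (rule dsMult_entry[OF c ds_unit_closed i r s])
  also have "\<dots> = (\<Sum>t<d i. if i' = i \<and> s = j \<and> t = l then c i $$ (r,t) else 0)"
    by (intro sum.cong refl) (auto simp: ds_unit_entry[OF i _ s])
  also have "\<dots> = (if i' = i \<and> s = j then c i $$ (r,l) else 0)"
    using l by (cases "i' = i \<and> s = j") auto
  finally show ?thesis .
qed

lemma finite_ds_index: "finite (ds_index k d)"
  unfolding ds_index_def by (intro finite_SigmaI) auto

lemma sum_ds_index: "(\<Sum>p\<in>ds_index k d. g p) = (\<Sum>i\<in>{1..k}. \<Sum>j<d i. \<Sum>l<d i. g (i,j,l))"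
proof -
  have "(\<Sum>p\<in>ds_index k d. g p) = (\<Sum>i\<in>{1..k}. \<Sum>q\<in>{..<d i} \<times> {..<d i}. g (i,q))"
    unfolding ds_index_def by (subst sum.Sigma) (auto simp: split_def)
  also have "\<dots> = (\<Sum>i\<in>{1..k}. \<Sum>j<d i. \<Sum>l<d i. g (i,j,l))"
    by (intro sum.cong refl) (simp add: sum.cartesian_product split_def)
  finally show ?thesis .
qed

lemma sum_ds_index_delta:
  assumes i: "i \<in> {1..k}" and s: "s < d i"
  shows "(\<Sum>(i',j,l)\<in>ds_index k d. if i' = i \<and> j = s then f l else 0) = (\<Sum>l<d i. f l)"
proof -
  have "(\<Sum>(i',j,l)\<in>ds_index k d. if i' = i \<and> j = s then f l else 0)
      = (\<Sum>i'\<in>{1..k}. if i' = i then \<Sum>j<d i'. \<Sum>l<d i'. if j = s then f l else 0 else 0)"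
    unfolding sum_ds_index by (intro sum.cong refl) auto
  also have "\<dots> = (\<Sum>j<d i. \<Sum>l<d i. if j = s then f l else 0)"
    using i by simp
  also have "\<dots> = (\<Sum>l<d i. f l)"
    using s by (subst sum.swap) simp
  finally show ?thesis .
qed

lemma dsA_unit_expansion:
  assumes x: "x \<in> dsA k d" and xs: "distinct xs" "set xs = ds_index k d"
  shows "dsSum k d (map (\<lambda>(i,j,l). dsSmult k (x i $$ (j,l)) (ds_unit k d i j l)) xs) = x"
    (is "dsSum k d (map ?f xs) = x")
proof (rule dsA_eqI[OF dsSum_closed x])
  show ss: "set (map ?f xs) \<subseteq> dsA k d" by (auto intro!: dsSmult_closed ds_unit_closed)
  fix i r s assume i: "i \<in> {1..k}" and r: "r < d i" and s: "s < d i"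
  have "dsSum k d (map ?f xs) i $$ (r,s) = (\<Sum>p\<in>ds_index k d. ?f p i $$ (r,s))"
    using xs by (simp add: dsSum_entry[OF ss i r s] sum_list_distinct_conv_sum_set)
  also have "\<dots> = (\<Sum>p\<in>ds_index k d. if p = (i,r,s) then x i $$ (r,s) else 0)"
    by (rule sum.cong)
      (auto simp: dsSmult_entry[OF ds_unit_closed i r s] ds_unit_entry[OF i r s] split: if_splits)
  also have "\<dots> = x i $$ (r,s)" using i r s by (simp add: ds_index_def finite_ds_index)
  finally show "dsSum k d (map ?f xs) i $$ (r,s) = x i $$ (r,s)" .
qed

lemma dsLinear_dsSum:
  assumes "dsLinear k d \<phi>" "set ys \<subseteq> dsA k d"
  shows "\<phi> (dsSum k d ys) = (\<Sum>y\<leftarrow>ys. \<phi> y)"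
  using assms(2)
proof (induction ys)
  case Nil
  have "\<phi> (dsSmult k 0 (dsOne k d)) = 0 * \<phi> (dsOne k d)"
    using assms(1) dsOne_closed unfolding dsLinear_def by blast
  then show ?case by (simp add: dsSum_def)
next
  case (Cons y ys)
  then show ?case using assms(1) dsSum_closed[of ys] unfolding dsLinear_def by (simp add: dsSum_def)
qed

lemma dsLinear_unit_expansion:
  assumes lin: "dsLinear k d \<phi>" and x: "x \<in> dsA k d"
  shows "\<phi> x = (\<Sum>i\<in>{1..k}. \<Sum>j<d i. \<Sum>l<d i. x i $$ (j,l) * \<phi> (ds_unit k d i j l))"
proof -
  obtain xs where xs: "distinct xs" "set xs = ds_index k d"
    using finite_distinct_list[OF finite_ds_index] by blast
  let ?f = "\<lambda>(i,j,l). dsSmult k (x i $$ (j,l)) (ds_unit k d i j l)"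
  have ss: "set (map ?f xs) \<subseteq> dsA k d" by (auto intro!: dsSmult_closed ds_unit_closed)
  have lin_smult: "\<And>c a. a \<in> dsA k d \<Longrightarrow> \<phi> (dsSmult k c a) = c * \<phi> a"
    using lin by (simp add: dsLinear_def)
  have "\<phi> x = \<phi> (dsSum k d (map ?f xs))"
    by (simp only: dsA_unit_expansion[OF x xs])
  also have "\<dots> = (\<Sum>p\<in>ds_index k d. \<phi> (?f p))"
    using xs by (simp add: dsLinear_dsSum[OF lin ss] sum_list_distinct_conv_sum_set comp_def)
  also have "\<dots> = (\<Sum>(i,j,l)\<in>ds_index k d. x i $$ (j,l) * \<phi> (ds_unit k d i j l))"
    by (intro sum.cong) (auto simp: lin_smult ds_unit_closed)
  finally show ?thesis by (simp add: sum_ds_index)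
qed

lemma eps0_diagonal:
  assumes "a \<in> dsA k d"
  shows "eps0 k d a = (\<Sum>i\<in>{1..k}. of_nat (d i) * (\<Sum>r<d i. a i $$ (r,r)))"
  unfolding eps0_def mtrace_def by (intro sum.cong refl) (simp add: dsA_dims[OF assms])

lemma eps0_dsMult:
  assumes x: "x \<in> dsA k d" and y: "y \<in> dsA k d"
  shows "eps0 k d (dsMult k x y) =
    (\<Sum>i\<in>{1..k}. of_nat (d i) * (\<Sum>r<d i. \<Sum>t<d i. x i $$ (r,t) * y i $$ (t,r)))"
  unfolding eps0_diagonal[OF dsMult_closed[OF x y]]
  by (intro sum.cong refl) (auto simp: dsMult_entry[OF x y])

lemma eps0_dsMult_commute:
  assumes x: "x \<in> dsA k d" and y: "y \<in> dsA k d"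
  shows "eps0 k d (dsMult k x y) = eps0 k d (dsMult k y x)"
  unfolding eps0_dsMult[OF x y] eps0_dsMult[OF y x]
  by (intro sum.cong refl) (subst sum.swap, simp add: mult.commute)

lemma eps0_dsMult_dsMinus:
  assumes y: "y \<in> dsA k d" and a: "a \<in> dsA k d" and b: "b \<in> dsA k d"
  shows "eps0 k d (dsMult k y (dsMinus k a b)) = eps0 k d (dsMult k y a) - eps0 k d (dsMult k y b)"
  unfolding eps0_dsMult[OF y dsMinus_closed[OF a b]] eps0_dsMult[OF y a] eps0_dsMult[OF y b]
    sum_subtractf[symmetric]
  by (intro sum.cong refl) (simp add: dsMinus_entry[OF a b] right_diff_distrib sum_subtractf)

lemma eps0_dsMult_unit:
  assumes c: "c \<in> dsA k d" and i: "i \<in> {1..k}" and j: "j < d i" and l: "l < d i"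
  shows "eps0 k d (dsMult k c (ds_unit k d i j l)) = of_nat (d i) * c i $$ (l,j)"
proof -
  have "eps0 k d (dsMult k c (ds_unit k d i j l)) =
     (\<Sum>i'\<in>{1..k}. of_nat (d i') * (\<Sum>r<d i'. dsMult k c (ds_unit k d i j l) i' $$ (r,r)))"
    by (rule eps0_diagonal[OF dsMult_closed[OF c ds_unit_closed]])
  also have "\<dots> = (\<Sum>i'\<in>{1..k}. of_nat (d i') *
      (\<Sum>r<d i'. if i = i' \<and> r = l then c i' $$ (r,j) else 0))"
    by (intro sum.cong refl arg_cong2[where f="(*)"]) (simp_all add: dsMult_unit_entry[OF c _ _ _ j])
  also have "\<dots> = (\<Sum>i'\<in>{1..k}. if i' = i then of_nat (d i) * c i $$ (l,j) else 0)"
    using l by (intro sum.cong refl) auto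
  also have "\<dots> = of_nat (d i) * c i $$ (l,j)" using i by simp
  finally show ?thesis .
qed

lemma eps0_unit_dsMult:
  assumes "c \<in> dsA k d" "i \<in> {1..k}" "j < d i" "l < d i"
  shows "eps0 k d (dsMult k (ds_unit k d i j l) c) = of_nat (d i) * c i $$ (l,j)"
  using eps0_dsMult_commute[OF ds_unit_closed assms(1)] eps0_dsMult_unit[OF assms] by simp

lemma dsLinear_eps0: "dsLinear k d (eps0 k d :: (nat \<Rightarrow> 'a::comm_ring_1 mat) \<Rightarrow> 'a)"
  unfolding dsLinear_def
proof (intro conjI ballI allI)
  fix a b :: "nat \<Rightarrow> 'a mat" assume a: "a \<in> dsA k d" and b: "b \<in> dsA k d"
  show "eps0 k d (dsAdd k a b) = eps0 k d a + eps0 k d b"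
    unfolding eps0_diagonal[OF dsAdd_closed[OF a b]] eps0_diagonal[OF a] eps0_diagonal[OF b]
      sum.distrib[symmetric]
    by (intro sum.cong refl) (simp add: dsAdd_entry[OF a b] sum.distrib distrib_left)
next
  fix c and a :: "nat \<Rightarrow> 'a mat" assume a: "a \<in> dsA k d"
  show "eps0 k d (dsSmult k c a) = c * eps0 k d a"
    unfolding eps0_diagonal[OF dsSmult_closed[OF a]] eps0_diagonal[OF a] sum_distrib_left
    by (intro sum.cong refl) (simp add: dsSmult_entry[OF a] sum_distrib_left algebra_simps)
qed

end

lemma mtrace_smult:
  "M \<in> carrier_mat n n \<Longrightarrow> mtrace (c \<cdot>\<^sub>m M) = c * mtrace (M :: 'a::comm_ring_1 mat)"
  unfolding mtrace_def by (auto simp: sum_distrib_left)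

lemma mtrace_smult_one_mat: "mtrace (c \<cdot>\<^sub>m 1\<^sub>m n) = of_nat n * (c :: 'a::comm_ring_1)"
  unfolding mtrace_def by simp

lemma smult_one_mat_pow: "(c \<cdot>\<^sub>m 1\<^sub>m n) ^\<^sub>m j = (c ^ j) \<cdot>\<^sub>m (1\<^sub>m n :: 'a::comm_ring_1 mat)"
proof (induction j)
  case (Suc j)
  have "(c \<cdot>\<^sub>m 1\<^sub>m n) ^\<^sub>m Suc j = (c ^ j \<cdot>\<^sub>m 1\<^sub>m n) * (c \<cdot>\<^sub>m 1\<^sub>m n)"
    using Suc by simp
  also have "\<dots> = c ^ j \<cdot>\<^sub>m (1\<^sub>m n * (c \<cdot>\<^sub>m 1\<^sub>m n))"
    by (rule mult_smult_assoc_mat) auto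
  also have "\<dots> = (c ^ Suc j) \<cdot>\<^sub>m (1\<^sub>m n :: 'a mat)"
    by (rule eq_matI) auto
  finally show ?case .
qed (auto intro!: eq_matI)

lemma smult_one_mat_right_inverse:
  fixes B :: "'a::field mat"
  assumes B: "B \<in> carrier_mat n n" and inv: "(c \<cdot>\<^sub>m 1\<^sub>m n) * B = 1\<^sub>m n" and n: "0 < n"
  shows "c \<noteq> 0" and "B = inverse c \<cdot>\<^sub>m 1\<^sub>m (n :: nat)"
proof -
  have cB: "c \<cdot>\<^sub>m B = 1\<^sub>m n"
    using inv mult_smult_assoc_mat[OF one_carrier_mat B] B by simp
  have entry: "c * B $$ (r,s) = (if r = s then 1 else 0)" if "r < n" "s < n" for r s
    using arg_cong[OF cB, of "\<lambda>M. M $$ (r,s)"] that B by auto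
  show c: "c \<noteq> 0" using entry[OF n n] by auto
  show "B = inverse c \<cdot>\<^sub>m 1\<^sub>m n"
    by (rule eq_matI) (use B c entry in \<open>auto simp: field_simps\<close>)
qed

section \<open>The twist of a Frobenius form\<close>

text \<open>Since \<open>\<epsilon>(E\<^sub>s\<^sub>r) = d\<^sub>i Tr(u\<^sub>i E\<^sub>s\<^sub>r) = d\<^sub>i (u\<^sub>i)\<^sub>r\<^sub>s\<close>, this is the only
  candidate for the twist \<open>u\<close> with \<open>\<epsilon> = \<epsilon>\<^sub>0(u \<cdot> _)\<close>.\<close>
definition frob_twist ::
  "nat \<Rightarrow> (nat \<Rightarrow> nat) \<Rightarrow> ((nat \<Rightarrow> 'a::field mat) \<Rightarrow> (nat \<Rightarrow> 'a mat) \<Rightarrow> 'a) \<Rightarrow> nat \<Rightarrow> 'a mat" where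
  "frob_twist k d B = (\<lambda>i. if i \<in> {1..k}
     then mat (d i) (d i) (\<lambda>(r,s). frob_eps k d B (ds_unit k d i s r) / of_nat (d i)) else 0\<^sub>m 0 0)"

text \<open>The element representing \<open>\<epsilon>\<^sub>0\<close>; as \<open>(a,b) = \<epsilon>\<^sub>0(u a b)\<close>, it is the inverse
  of the twist (\<open>frob_twist_mult_inv\<close>).\<close>
definition frob_twist_inv ::
  "nat \<Rightarrow> (nat \<Rightarrow> nat) \<Rightarrow> ((nat \<Rightarrow> 'a::field mat) \<Rightarrow> (nat \<Rightarrow> 'a mat) \<Rightarrow> 'a) \<Rightarrow> nat \<Rightarrow> 'a mat" where
  "frob_twist_inv k d B = (SOME v. v \<in> dsA k d \<and> (\<forall>b\<in>dsA k d. B v b = eps0 k d b))"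

definition dual_unit ::
  "nat \<Rightarrow> (nat \<Rightarrow> nat) \<Rightarrow> ((nat \<Rightarrow> 'a::field mat) \<Rightarrow> (nat \<Rightarrow> 'a mat) \<Rightarrow> 'a) \<Rightarrow>
    nat \<Rightarrow> nat \<Rightarrow> nat \<Rightarrow> nat \<Rightarrow> 'a mat" where
  "dual_unit k d B i j l =
     dsSmult k (1 / of_nat (d i)) (dsMult k (frob_twist_inv k d B) (ds_unit k d i l j))"

definition ds_trace_scalar :: "nat \<Rightarrow> (nat \<Rightarrow> nat) \<Rightarrow> (nat \<Rightarrow> 'a::field mat) \<Rightarrow> nat \<Rightarrow> 'a mat" where
  "ds_trace_scalar k d v =
     (\<lambda>i. if i \<in> {1..k} then (mtrace (v i) / of_nat (d i)) \<cdot>\<^sub>m 1\<^sub>m (d i) else 0\<^sub>m 0 0)"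

context
  fixes k :: nat and d :: "nat \<Rightarrow> nat"
    and B :: "(nat \<Rightarrow> 'a::field_char_0 mat) \<Rightarrow> (nat \<Rightarrow> 'a mat) \<Rightarrow> 'a"
  assumes dpos: "\<forall>i\<in>{1..k}. 0 < d i"
    and frob: "frobenius_form k d B"
begin

lemma of_nat_block_dim_nonzero: "i \<in> {1..k} \<Longrightarrow> (of_nat (d i) :: 'a) \<noteq> 0"
  using dpos by auto

lemma dsLinear_frob_eps: "dsLinear k d (frob_eps k d B)"
  using frob dsOne_closed unfolding frobenius_form_def frob_eps_def by blast

lemma frob_smult_left: "a \<in> dsA k d \<Longrightarrow> b \<in> dsA k d \<Longrightarrow> B (dsSmult k c a) b = c * B a b"
  using frob unfolding frobenius_form_def dsLinear_def by blast

lemma frob_eq_frob_eps: "a \<in> dsA k d \<Longrightarrow> b \<in> dsA k d \<Longrightarrow> B a b = frob_eps k d B (dsMult k a b)"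
  using frob dsOne_closed dsMult_one_left[of a k d] unfolding frobenius_form_def frob_eps_def
  by metis

lemma frob_twist_closed: "frob_twist k d B \<in> dsA k d"
  by (rule dsA_I) (auto simp: frob_twist_def)

lemma frob_eps_twist:
  assumes x: "x \<in> dsA k d"
  shows "frob_eps k d B x = eps0 k d (dsMult k (frob_twist k d B) x)"
proof -
  let ?e = "\<lambda>i j l. frob_eps k d B (ds_unit k d i j l)"
  have "frob_eps k d B x = (\<Sum>i\<in>{1..k}. \<Sum>j<d i. \<Sum>l<d i. x i $$ (j,l) * ?e i j l)"
    by (rule dsLinear_unit_expansion[OF dsLinear_frob_eps x])
  also have "\<dots> = (\<Sum>i\<in>{1..k}. of_nat (d i) *
      (\<Sum>r<d i. \<Sum>t<d i. frob_twist k d B i $$ (r,t) * x i $$ (t,r)))"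
  proof (rule sum.cong[OF refl])
    fix i assume i: "i \<in> {1..k}"
    have "of_nat (d i) * (\<Sum>r<d i. \<Sum>t<d i. frob_twist k d B i $$ (r,t) * x i $$ (t,r))
        = (\<Sum>r<d i. \<Sum>t<d i. x i $$ (t,r) * ?e i t r)"
      using i of_nat_block_dim_nonzero[OF i] by (simp add: frob_twist_def sum_distrib_left mult_ac)
    also have "\<dots> = (\<Sum>j<d i. \<Sum>l<d i. x i $$ (j,l) * ?e i j l)"
      by (rule sum.swap)
    finally show "(\<Sum>j<d i. \<Sum>l<d i. x i $$ (j,l) * ?e i j l) =
        of_nat (d i) * (\<Sum>r<d i. \<Sum>t<d i. frob_twist k d B i $$ (r,t) * x i $$ (t,r))" ..
  qed
  also have "\<dots> = eps0 k d (dsMult k (frob_twist k d B) x)"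
    by (rule eps0_dsMult[OF frob_twist_closed x, symmetric])
  finally show ?thesis .
qed

lemma frob_eq_eps0_twist:
  "a \<in> dsA k d \<Longrightarrow> b \<in> dsA k d \<Longrightarrow> B a b = eps0 k d (dsMult k (frob_twist k d B) (dsMult k a b))"
  using frob_eq_frob_eps frob_eps_twist dsMult_closed by metis

lemma frob_twist_inv_closed: "frob_twist_inv k d B \<in> dsA k d"
  and frob_twist_inv_represents_eps0: "b \<in> dsA k d \<Longrightarrow> B (frob_twist_inv k d B) b = eps0 k d b"
proof -
  have "\<exists>v. v \<in> dsA k d \<and> (\<forall>b\<in>dsA k d. B v b = eps0 k d b)"
    using frob dsLinear_eps0 unfolding frobenius_form_def by blast
  then have "frob_twist_inv k d B \<in> dsA k d \<and> (\<forall>b\<in>dsA k d. B (frob_twist_inv k d B) b = eps0 k d b)"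
    unfolding frob_twist_inv_def by (rule someI_ex)
  then show "frob_twist_inv k d B \<in> dsA k d" "b \<in> dsA k d \<Longrightarrow> B (frob_twist_inv k d B) b = eps0 k d b"
    by auto
qed

lemma frob_twist_mult_inv_block:
  assumes i: "i \<in> {1..k}"
  shows "frob_twist k d B i * frob_twist_inv k d B i = 1\<^sub>m (d i)"
proof (rule eq_matI)
  let ?u = "frob_twist k d B" and ?v = "frob_twist_inv k d B"
  have uv: "dsMult k ?u ?v \<in> dsA k d" by (rule dsMult_closed[OF frob_twist_closed frob_twist_inv_closed])
  fix l j assume "l < dim_row (1\<^sub>m (d i) :: 'a mat)" and "j < dim_col (1\<^sub>m (d i) :: 'a mat)"
  then have l: "l < d i" and j: "j < d i" by auto
  have "of_nat (d i) * dsMult k ?u ?v i $$ (l,j) = eps0 k d (dsMult k (dsMult k ?u ?v) (ds_unit k d i j l))"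
    by (rule eps0_dsMult_unit[OF uv i j l, symmetric])
  also have "\<dots> = B ?v (ds_unit k d i j l)"
    using frob_eq_eps0_twist[OF frob_twist_inv_closed ds_unit_closed]
      dsMult_assoc[OF frob_twist_closed frob_twist_inv_closed ds_unit_closed] by simp
  also have "\<dots> = eps0 k d (dsMult k (dsOne k d) (ds_unit k d i j l))"
    by (simp add: frob_twist_inv_represents_eps0 ds_unit_closed dsMult_one_left)
  also have "\<dots> = of_nat (d i) * dsOne k d i $$ (l,j)"
    by (rule eps0_dsMult_unit[OF dsOne_closed[of k d] i j l])
  finally have "dsMult k ?u ?v i $$ (l,j) = dsOne k d i $$ (l,j)"
    using of_nat_block_dim_nonzero[OF i] by simp
  then show "(?u i * ?v i) $$ (l,j) = 1\<^sub>m (d i) $$ (l,j)"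
    using i l j by (simp add: dsMult_def dsOne_def)
qed (use i frob_twist_closed frob_twist_inv_closed in \<open>auto dest: dsA_dims\<close>)

lemma frob_twist_inv_mult_block: "i \<in> {1..k} \<Longrightarrow> frob_twist_inv k d B i * frob_twist k d B i = 1\<^sub>m (d i)"
  using mat_mult_left_right_inverse dsA_D(1)[OF frob_twist_closed] dsA_D(1)[OF frob_twist_inv_closed]
    frob_twist_mult_inv_block by blast

lemma frob_twist_mult_inv: "dsMult k (frob_twist k d B) (frob_twist_inv k d B) = dsOne k d"
  by (rule ext) (simp add: dsMult_def dsOne_def frob_twist_mult_inv_block)

lemma frob_twist_inv_mult: "dsMult k (frob_twist_inv k d B) (frob_twist k d B) = dsOne k d"
  by (rule ext) (simp add: dsMult_def dsOne_def frob_twist_inv_mult_block)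

section \<open>The copairing and \<open>\<ell>\<close>\<close>

lemma frob_unit_right:
  assumes a: "a \<in> dsA k d" and i: "i \<in> {1..k}" and j: "j < d i" and l: "l < d i"
  shows "B a (ds_unit k d i j l) = of_nat (d i) * dsMult k (frob_twist k d B) a i $$ (l,j)"
proof -
  let ?u = "frob_twist k d B"
  have "B a (ds_unit k d i j l) = eps0 k d (dsMult k (dsMult k ?u a) (ds_unit k d i j l))"
    by (simp add: frob_eq_eps0_twist[OF a ds_unit_closed] dsMult_assoc[OF frob_twist_closed a ds_unit_closed])
  also have "\<dots> = of_nat (d i) * dsMult k ?u a i $$ (l,j)"
    by (rule eps0_dsMult_unit[OF dsMult_closed[OF frob_twist_closed a] i j l])
  finally show ?thesis .
qed

lemma frob_unit_left:
  assumes g: "g \<in> dsA k d" and i: "i \<in> {1..k}" and j: "j < d i" and l: "l < d i"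
  shows "B (ds_unit k d i j l) g = of_nat (d i) * dsMult k g (frob_twist k d B) i $$ (l,j)"
proof -
  let ?u = "frob_twist k d B" and ?E = "ds_unit k d i j l"
  have "B ?E g = eps0 k d (dsMult k (dsMult k ?u ?E) g)"
    by (simp add: frob_eq_eps0_twist[OF ds_unit_closed g] dsMult_assoc[OF frob_twist_closed ds_unit_closed g])
  also have "\<dots> = eps0 k d (dsMult k (dsMult k g ?u) ?E)"
    by (simp add: eps0_dsMult_commute[OF dsMult_closed[OF frob_twist_closed ds_unit_closed] g]
        dsMult_assoc[OF g frob_twist_closed ds_unit_closed])
  also have "\<dots> = of_nat (d i) * dsMult k g ?u i $$ (l,j)"
    by (rule eps0_dsMult_unit[OF dsMult_closed[OF g frob_twist_closed] i j l])
  finally show ?thesis .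
qed

lemma dual_unit_closed: "dual_unit k d B i j l \<in> dsA k d"
  unfolding dual_unit_def by (intro dsSmult_closed dsMult_closed frob_twist_inv_closed ds_unit_closed)

lemma frob_dual_unit:
  assumes a: "a \<in> dsA k d" and i: "i \<in> {1..k}" and j: "j < d i" and l: "l < d i"
  shows "B (dual_unit k d B i j l) a = a i $$ (j,l)"
proof -
  let ?u = "frob_twist k d B" and ?v = "frob_twist_inv k d B" and ?E = "ds_unit k d i l j"
  have vE: "dsMult k ?v ?E \<in> dsA k d" by (rule dsMult_closed[OF frob_twist_inv_closed ds_unit_closed])
  have "B (dsMult k ?v ?E) a = eps0 k d (dsMult k (dsMult k (dsMult k ?u ?v) ?E) a)"
    by (simp only: frob_eq_eps0_twist[OF vE a] dsMult_assoc[OF frob_twist_closed vE a, symmetric]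
        dsMult_assoc[OF frob_twist_closed frob_twist_inv_closed ds_unit_closed, symmetric])
  also have "\<dots> = of_nat (d i) * a i $$ (j,l)"
    by (simp add: frob_twist_mult_inv dsMult_one_left ds_unit_closed eps0_unit_dsMult[OF a i l j])
  finally show ?thesis
    unfolding dual_unit_def frob_smult_left[OF vE a] using of_nat_block_dim_nonzero[OF i] by simp
qed

lemma dsSum_frob_dual_unit_smult_unit:
  assumes a: "a \<in> dsA k d" and xs: "distinct xs" "set xs = ds_index k d"
  shows "dsSum k d (map (\<lambda>(i,j,l). dsSmult k (B (dual_unit k d B i j l) a) (ds_unit k d i j l)) xs) = a"
proof -
  have coefficients: "map (\<lambda>(i,j,l). dsSmult k (B (dual_unit k d B i j l) a) (ds_unit k d i j l)) xs
      = map (\<lambda>(i,j,l). dsSmult k (a i $$ (j,l)) (ds_unit k d i j l)) xs"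
    (is "map ?f xs = map ?g xs")
  proof (rule map_cong[OF refl])
    fix p assume "p \<in> set xs"
    moreover obtain i j l where "p = (i,j,l)" by (cases p)
    ultimately show "?f p = ?g p" using xs(2) by (simp add: ds_index_def frob_dual_unit[OF a])
  qed
  show ?thesis unfolding coefficients by (rule dsA_unit_expansion[OF a xs])
qed

lemma dsSum_frob_unit_smult_dual_unit:
  assumes a: "a \<in> dsA k d" and xs: "distinct xs" "set xs = ds_index k d"
  shows "dsSum k d (map (\<lambda>(i,j,l). dsSmult k (B a (ds_unit k d i j l)) (dual_unit k d B i j l)) xs) = a"
    (is "dsSum k d ?ys = a")
proof (rule dsA_eqI[OF dsSum_closed a])
  let ?u = "frob_twist k d B" and ?v = "frob_twist_inv k d B"
  show ys: "set ?ys \<subseteq> dsA k d" by (auto intro!: dsSmult_closed dual_unit_closed)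
  fix i r s assume i: "i \<in> {1..k}" and r: "r < d i" and s: "s < d i"
  have summand: "B a (ds_unit k d i' j l) * dual_unit k d B i' j l i $$ (r,s)
      = (if i' = i \<and> j = s then ?v i $$ (r,l) * dsMult k ?u a i $$ (l,s) else 0)"
    if "(i',j,l) \<in> ds_index k d" for i' j l
  proof -
    from that have i': "i' \<in> {1..k}" and j: "j < d i'" and l: "l < d i'" by (auto simp: ds_index_def)
    show ?thesis
      using of_nat_block_dim_nonzero[OF i']
      by (simp add: frob_unit_right[OF a i' j l] dual_unit_def
          dsSmult_entry[OF dsMult_closed[OF frob_twist_inv_closed ds_unit_closed] i r s]
          dsMult_unit_entry[OF frob_twist_inv_closed i r s l])
  qed
  have "dsSum k d ?ys i $$ (r,s)
      = (\<Sum>(i',j,l)\<in>ds_index k d. B a (ds_unit k d i' j l) * dual_unit k d B i' j l i $$ (r,s))"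
    unfolding dsSum_entry[OF ys i r s] using xs
    by (simp add: sum_list_distinct_conv_sum_set split_def dsSmult_entry[OF dual_unit_closed i r s])
  also have "\<dots> = (\<Sum>(i',j,l)\<in>ds_index k d.
      if i' = i \<and> j = s then ?v i $$ (r,l) * dsMult k ?u a i $$ (l,s) else 0)"
    by (intro sum.cong refl) (auto simp: summand)
  also have "\<dots> = dsMult k ?v (dsMult k ?u a) i $$ (r,s)"
    by (simp add: sum_ds_index_delta[where k=k and d=d, OF i s]
        dsMult_entry[OF frob_twist_inv_closed dsMult_closed[OF frob_twist_closed a] i r s])
  also have "dsMult k ?v (dsMult k ?u a) = a"
    by (simp add: dsMult_assoc[OF frob_twist_inv_closed frob_twist_closed a, symmetric]
        frob_twist_inv_mult dsMult_one_left a)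
  finally show "dsSum k d ?ys i $$ (r,s) = a i $$ (r,s)" .
qed

lemma frob_copairing_exists: "\<exists>gs. is_copairing k d B gs"
proof -
  obtain xs where xs: "distinct xs" "set xs = ds_index k d"
    using finite_distinct_list[OF finite_ds_index] by blast
  define gs :: "((nat \<Rightarrow> 'a mat) \<times> (nat \<Rightarrow> 'a mat)) list"
    where "gs = map (\<lambda>(i,j,l). (ds_unit k d i j l, dual_unit k d B i j l)) xs"
  have expand: "map (\<lambda>p. dsSmult k (B a (fst p)) (snd p)) gs
      = map (\<lambda>(i,j,l). dsSmult k (B a (ds_unit k d i j l)) (dual_unit k d B i j l)) xs"
    "map (\<lambda>p. dsSmult k (B (snd p) a) (fst p)) gs
      = map (\<lambda>(i,j,l). dsSmult k (B (dual_unit k d B i j l) a) (ds_unit k d i j l)) xs" for a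
    unfolding gs_def by (simp_all add: case_prod_unfold)
  have "\<forall>p\<in>set gs. fst p \<in> dsA k d \<and> snd p \<in> dsA k d"
    unfolding gs_def by (simp add: case_prod_unfold ds_unit_closed dual_unit_closed)
  then have "is_copairing k d B gs"
    unfolding is_copairing_def expand
    using dsSum_frob_dual_unit_smult_unit[OF _ xs] dsSum_frob_unit_smult_dual_unit[OF _ xs] by blast
  then show ?thesis ..
qed

lemma is_copairing_closed:
  "is_copairing k d B gs \<Longrightarrow> p \<in> set gs \<Longrightarrow> fst p \<in> dsA k d \<and> snd p \<in> dsA k d"
  unfolding is_copairing_def by blast

lemma is_copairing_expands_left:
  "is_copairing k d B gs \<Longrightarrow> a \<in> dsA k d \<Longrightarrow> dsSum k d (map (\<lambda>p. dsSmult k (B a (fst p)) (snd p)) gs) = a"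
  unfolding is_copairing_def by blast

lemma ds_trace_scalar_closed: "ds_trace_scalar k d v \<in> dsA k d"
  by (rule dsA_I) (auto simp: ds_trace_scalar_def)

lemma copairing_twisted_entry:
  assumes gs: "is_copairing k d B gs" and i: "i \<in> {1..k}"
    and r: "r < d i" and j: "j < d i" and m: "m < d i" and s: "s < d i"
  shows "(\<Sum>p\<leftarrow>gs. dsMult k (fst p) (frob_twist k d B) i $$ (r,j) * snd p i $$ (m,s))
    = (if j = m \<and> r = s then 1 / of_nat (d i) else 0)"
proof -
  let ?E = "ds_unit k d i j r"
  let ?zs = "map (\<lambda>p. dsSmult k (B ?E (fst p)) (snd p)) gs"
  note mem = is_copairing_closed[OF gs]
  have zs: "set ?zs \<subseteq> dsA k d" using mem by (auto intro!: dsSmult_closed)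
  have summand: "dsSmult k (B ?E (fst p)) (snd p) i $$ (m,s)
      = of_nat (d i) * (dsMult k (fst p) (frob_twist k d B) i $$ (r,j) * snd p i $$ (m,s))"
    if "p \<in> set gs" for p
    using mem[OF that] by (simp add: dsSmult_entry[where k=k and d=d, OF _ i m s] frob_unit_left[OF _ i j r])
  have "of_nat (d i) * (\<Sum>p\<leftarrow>gs. dsMult k (fst p) (frob_twist k d B) i $$ (r,j) * snd p i $$ (m,s))
      = (\<Sum>p\<leftarrow>gs. dsSmult k (B ?E (fst p)) (snd p) i $$ (m,s))"
    unfolding sum_list_const_mult[symmetric] by (intro arg_cong[where f=sum_list] map_cong refl) (simp add: summand)
  also have "\<dots> = dsSum k d ?zs i $$ (m,s)"
    by (simp add: dsSum_entry[OF zs i m s] comp_def)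
  also have "\<dots> = ?E i $$ (m,s)"
    by (simp only: is_copairing_expands_left[OF gs ds_unit_closed])
  also have "\<dots> = (if j = m \<and> r = s then 1 else 0)"
    by (simp add: ds_unit_entry[where k=k and d=d, OF i m s])
  finally show ?thesis using of_nat_block_dim_nonzero[OF i] by (auto simp: field_simps)
qed

lemma dsMult_entry_through_twist:
  assumes g: "g \<in> dsA k d" and h: "h \<in> dsA k d" and i: "i \<in> {1..k}" and r: "r < d i" and s: "s < d i"
  shows "dsMult k g h i $$ (r,s) = (\<Sum>m<d i. \<Sum>j<d i.
    frob_twist_inv k d B i $$ (j,m) * (dsMult k g (frob_twist k d B) i $$ (r,j) * h i $$ (m,s)))"
proof -
  let ?u = "frob_twist k d B" and ?v = "frob_twist_inv k d B"
  have "dsMult k (dsMult k g ?u) ?v = g"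
    by (simp add: dsMult_assoc[OF g frob_twist_closed frob_twist_inv_closed]
        frob_twist_mult_inv dsMult_one_right g)
  then have "g i $$ (r,m) = (\<Sum>j<d i. dsMult k g ?u i $$ (r,j) * ?v i $$ (j,m))" if "m < d i" for m
    using dsMult_entry[OF dsMult_closed[OF g frob_twist_closed] frob_twist_inv_closed i r that] by simp
  then show ?thesis
    unfolding dsMult_entry[OF g h i r s]
    by (intro sum.cong refl) (simp add: sum_distrib_left sum_distrib_right mult_ac)
qed

text \<open>This holds for every copairing, as it must, since \<open>frob_ell\<close> picks one by choice.\<close>
lemma copairing_mult_sum:
  assumes gs: "is_copairing k d B gs"
  shows "dsSum k d (map (\<lambda>p. dsMult k (fst p) (snd p)) gs) = ds_trace_scalar k d (frob_twist_inv k d B)"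
proof -
  let ?u = "frob_twist k d B" and ?v = "frob_twist_inv k d B"
  note mem = is_copairing_closed[OF gs]
  have ys: "set (map (\<lambda>p. dsMult k (fst p) (snd p)) gs) \<subseteq> dsA k d"
    using mem by (auto intro!: dsMult_closed)
  show ?thesis
  proof (rule dsA_eqI[OF dsSum_closed[OF ys] ds_trace_scalar_closed])
    fix i r s assume i: "i \<in> {1..k}" and r: "r < d i" and s: "s < d i"
    let ?G = "\<lambda>p j. dsMult k (fst p) ?u i $$ (r,j)"
    have "dsSum k d (map (\<lambda>p. dsMult k (fst p) (snd p)) gs) i $$ (r,s)
        = (\<Sum>p\<leftarrow>gs. \<Sum>m<d i. \<Sum>j<d i. ?v i $$ (j,m) * (?G p j * snd p i $$ (m,s)))"
      unfolding dsSum_entry[OF ys i r s] map_map comp_def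
      using mem by (intro arg_cong[where f=sum_list] map_cong refl)
        (simp add: dsMult_entry_through_twist[OF _ _ i r s])
    also have "\<dots> = (\<Sum>m<d i. \<Sum>j<d i. ?v i $$ (j,m) * (\<Sum>p\<leftarrow>gs. ?G p j * snd p i $$ (m,s)))"
      by (simp only: sum_list_map_sum sum_list_const_mult)
    also have "\<dots> = (\<Sum>m<d i. \<Sum>j<d i. if j = m \<and> r = s then ?v i $$ (j,m) / of_nat (d i) else 0)"
      by (intro sum.cong refl) (simp add: copairing_twisted_entry[OF gs i r _ _ s])
    also have "\<dots> = ds_trace_scalar k d ?v i $$ (r,s)"
      using i r s dsA_dims[OF frob_twist_inv_closed i]
      by (auto simp: ds_trace_scalar_def mtrace_def sum_divide_distrib)
    finally show "dsSum k d (map (\<lambda>p. dsMult k (fst p) (snd p)) gs) i $$ (r,s)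
        = ds_trace_scalar k d ?v i $$ (r,s)" .
  qed
qed

lemma frob_ell_eq: "frob_ell k d B = ds_trace_scalar k d (frob_twist_inv k d B)"
  unfolding frob_ell_def Let_def
  by (rule copairing_mult_sum, rule someI_ex, rule frob_copairing_exists)

lemma frob_dim_eq:
  "frob_dim k d B n = (\<Sum>i\<in>{1..k}.
     of_nat (d i) * (mtrace (frob_twist_inv k d B i) / of_nat (d i)) ^ n * mtrace (frob_twist k d B i))"
proof -
  let ?u = "frob_twist k d B" and ?L = "ds_trace_scalar k d (frob_twist_inv k d B)"
  have "frob_dim k d B n = eps0 k d (dsMult k ?u (dsPow k ?L n))"
    unfolding frob_dim_def frob_ell_eq by (rule frob_eps_twist[OF dsPow_closed[OF ds_trace_scalar_closed]])
  also have "\<dots> = (\<Sum>i\<in>{1..k}.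
      of_nat (d i) * (mtrace (frob_twist_inv k d B i) / of_nat (d i)) ^ n * mtrace (?u i))"
    unfolding eps0_def
  proof (intro sum.cong refl)
    fix i assume i: "i \<in> {1..k}"
    let ?c = "mtrace (frob_twist_inv k d B i) / of_nat (d i)"
    have ui: "?u i \<in> carrier_mat (d i) (d i)" by (rule dsA_D(1)[OF frob_twist_closed i])
    have "dsMult k ?u (dsPow k ?L n) i = ?c ^ n \<cdot>\<^sub>m ?u i"
      using i mult_smult_distrib[OF ui, of "1\<^sub>m (d i)" "d i" "?c ^ n"] ui
      by (simp add: dsMult_def dsPow_def ds_trace_scalar_def smult_one_mat_pow)
    then show "of_nat (d i) * mtrace (dsMult k ?u (dsPow k ?L n) i) = of_nat (d i) * ?c ^ n * mtrace (?u i)"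
      by (simp add: mtrace_smult[OF ui])
  qed
  finally show ?thesis .
qed

section \<open>Weak symmetry\<close>

lemma frob_twist_mult_trace_scalar_entry:
  assumes i: "i \<in> {1..k}" and m: "m < d i" and j: "j < d i"
  shows "dsMult k (frob_twist k d B) (ds_trace_scalar k d (frob_twist_inv k d B)) i $$ (m,j)
    = mtrace (frob_twist_inv k d B i) / of_nat (d i) * frob_twist k d B i $$ (m,j)"
proof -
  have "dsMult k (frob_twist k d B) (ds_trace_scalar k d (frob_twist_inv k d B)) i $$ (m,j)
      = (\<Sum>t<d i. frob_twist k d B i $$ (m,t) * ds_trace_scalar k d (frob_twist_inv k d B) i $$ (t,j))"
    by (rule dsMult_entry[OF frob_twist_closed ds_trace_scalar_closed i m j])
  also have "\<dots> = (\<Sum>t<d i. if t = j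
      then mtrace (frob_twist_inv k d B i) / of_nat (d i) * frob_twist k d B i $$ (m,t) else 0)"
    using i j by (intro sum.cong refl) (auto simp: ds_trace_scalar_def)
  finally show ?thesis using j by simp
qed

text \<open>Testing weak symmetry on the commutator of \<open>E\<^sub>j\<^sub>l\<close> and \<open>E\<^sub>l\<^sub>m\<close> gives
  \<open>c\<^sub>i ((u\<^sub>i)\<^sub>m\<^sub>j - \<delta>\<^sub>j\<^sub>m (u\<^sub>i)\<^sub>l\<^sub>l) = 0\<close>, where \<open>\<ell>\<^sub>i = c\<^sub>i 1\<close>.\<close>
lemma weakly_symmetric_twist_entry:
  assumes ws: "weakly_symmetric k d B" and i: "i \<in> {1..k}" and tr: "mtrace (frob_twist_inv k d B i) \<noteq> 0"
    and m: "m < d i" and j: "j < d i" and l: "l < d i"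
  shows "frob_twist k d B i $$ (m,j) = (if m = j then frob_twist k d B i $$ (l,l) else 0)"
proof -
  let ?Y = "dsMult k (frob_twist k d B) (frob_ell k d B)"
  let ?a = "ds_unit k d i j l" and ?b = "ds_unit k d i l m"
  have Y: "?Y \<in> dsA k d"
    unfolding frob_ell_eq by (rule dsMult_closed[OF frob_twist_closed ds_trace_scalar_closed])
  have ab: "dsMult k ?a ?b \<in> dsA k d" "dsMult k ?b ?a \<in> dsA k d"
    by (auto intro!: dsMult_closed ds_unit_closed)
  have eps0_Y: "eps0 k d (dsMult k ?Y (dsMult k x (ds_unit k d i p q))) = of_nat (d i) * dsMult k ?Y x i $$ (q,p)"
    if "x \<in> dsA k d" "p < d i" "q < d i" for x p q
    using that dsMult_assoc[OF Y that(1) ds_unit_closed]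
      eps0_dsMult_unit[OF dsMult_closed[OF Y that(1)] i] by simp
  have "0 = frob_eps k d B (dsMult k (frob_ell k d B) (dsMinus k (dsMult k ?a ?b) (dsMult k ?b ?a)))"
    using ws ds_unit_closed unfolding weakly_symmetric_def by metis
  also have "\<dots> = eps0 k d (dsMult k ?Y (dsMinus k (dsMult k ?a ?b) (dsMult k ?b ?a)))"
    unfolding frob_ell_eq
    by (simp add: frob_eps_twist dsMult_closed ds_trace_scalar_closed dsMinus_closed[OF ab]
        dsMult_assoc[OF frob_twist_closed ds_trace_scalar_closed dsMinus_closed[OF ab]])
  also have "\<dots> = of_nat (d i) * (?Y i $$ (m,j) - (if j = m then ?Y i $$ (l,l) else 0))"
    by (simp add: eps0_dsMult_dsMinus[OF Y ab] eps0_Y ds_unit_closed j l m right_diff_distrib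
        dsMult_unit_entry[OF Y i _ _ j] dsMult_unit_entry[OF Y i _ _ l])
  finally have "?Y i $$ (m,j) = (if j = m then ?Y i $$ (l,l) else 0)"
    using of_nat_block_dim_nonzero[OF i] by simp
  then show ?thesis
    unfolding frob_ell_eq frob_twist_mult_trace_scalar_entry[OF i m j]
      frob_twist_mult_trace_scalar_entry[OF i l l]
    using tr of_nat_block_dim_nonzero[OF i] by (auto split: if_splits)
qed

lemma weakly_symmetric_twist_block_scalar:
  assumes ws: "weakly_symmetric k d B" and i: "i \<in> {1..k}" and tr: "mtrace (frob_twist_inv k d B i) \<noteq> 0"
  shows "\<exists>\<mu>. \<mu> \<noteq> 0 \<and> frob_twist k d B i = inverse \<mu> \<cdot>\<^sub>m 1\<^sub>m (d i)
    \<and> frob_twist_inv k d B i = \<mu> \<cdot>\<^sub>m 1\<^sub>m (d i)"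
proof -
  have d0: "0 < d i" using dpos i by blast
  define c where "c = frob_twist k d B i $$ (0,0)"
  have "frob_twist k d B i $$ (m,j) = (if m = j then c else 0)" if "m < d i" "j < d i" for m j
    using weakly_symmetric_twist_entry[OF ws i tr that d0] unfolding c_def .
  then have u: "frob_twist k d B i = c \<cdot>\<^sub>m 1\<^sub>m (d i)"
    by (intro eq_matI) (simp_all add: dsA_dims[OF frob_twist_closed i])
  have "(c \<cdot>\<^sub>m 1\<^sub>m (d i)) * frob_twist_inv k d B i = 1\<^sub>m (d i)"
    using frob_twist_mult_inv_block[OF i] by (simp add: u)
  from smult_one_mat_right_inverse[OF dsA_D(1)[OF frob_twist_inv_closed i] this d0]
  show ?thesis using u by (intro exI[of _ "inverse c"]) simp
qed

lemma frob_twist_inv_trace_nonzero_if_dim_one: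
  assumes i: "i \<in> {1..k}" and d1: "d i = 1"
  shows "mtrace (frob_twist_inv k d B i) \<noteq> 0"
proof -
  have "frob_twist k d B i $$ (0,0) * frob_twist_inv k d B i $$ (0,0) = 1"
    using arg_cong[OF frob_twist_mult_inv_block[OF i], of "\<lambda>M. M $$ (0,0)"]
      dsA_dims[OF frob_twist_closed i] dsA_dims[OF frob_twist_inv_closed i] d1
    by (simp add: scalar_prod_def)
  then show ?thesis
    unfolding mtrace_def using dsA_dims[OF frob_twist_inv_closed i] d1 by auto
qed

lemma frob_dim_split:
  assumes I: "I \<subseteq> {1..k}" and traceless: "\<forall>i\<in>{1..k} - I. mtrace (frob_twist_inv k d B i) = 0"
    and scalar: "\<forall>i\<in>I. frob_twist k d B i = inverse (\<mu> i) \<cdot>\<^sub>m 1\<^sub>m (d i)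
      \<and> frob_twist_inv k d B i = \<mu> i \<cdot>\<^sub>m 1\<^sub>m (d i)"
  shows "frob_dim k d B n = (\<Sum>i\<in>I. of_nat ((d i)\<^sup>2) * inverse (\<mu> i) * \<mu> i ^ n)
    + (\<Sum>i\<in>{1..k} - I. of_nat (d i) * 0 ^ n * mtrace (frob_twist k d B i))"
proof -
  let ?f = "\<lambda>i. of_nat (d i) * (mtrace (frob_twist_inv k d B i) / of_nat (d i)) ^ n
    * mtrace (frob_twist k d B i)"
  have "frob_dim k d B n = sum ?f I + sum ?f ({1..k} - I)"
    unfolding frob_dim_eq using sum.subset_diff[OF I finite_atLeastAtMost] by (simp add: add.commute)
  also have "sum ?f I = (\<Sum>i\<in>I. of_nat ((d i)\<^sup>2) * inverse (\<mu> i) * \<mu> i ^ n)"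
    using scalar I of_nat_block_dim_nonzero
    by (intro sum.cong refl) (auto simp: mtrace_smult_one_mat power2_eq_square)
  also have "sum ?f ({1..k} - I) = (\<Sum>i\<in>{1..k} - I. of_nat (d i) * 0 ^ n * mtrace (frob_twist k d B i))"
    using traceless by (intro sum.cong refl) simp
  finally show ?thesis .
qed

lemma frob_dims_of_scalar_blocks:
  assumes I: "I \<subseteq> {1..k}" and traceless: "\<forall>i\<in>{1..k} - I. mtrace (frob_twist_inv k d B i) = 0"
    and scalar: "\<forall>i\<in>I. \<mu> i \<noteq> 0 \<and> frob_twist k d B i = inverse (\<mu> i) \<cdot>\<^sub>m 1\<^sub>m (d i)
      \<and> frob_twist_inv k d B i = \<mu> i \<cdot>\<^sub>m 1\<^sub>m (d i)"
  shows "frob_dim k d B 1 = of_nat (\<Sum>i\<in>I. (d i)\<^sup>2)"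
    and "\<forall>j\<ge>1. frob_dim k d B j = (\<Sum>i\<in>I. of_nat ((d i)\<^sup>2) * inverse (\<mu> i) * \<mu> i ^ j)"
    and "frob_dim k d B 0 = (\<Sum>i\<in>I. of_nat ((d i)\<^sup>2) * inverse (\<mu> i))
      + (\<Sum>i\<in>{1..k} - I. of_nat (d i) * mtrace (frob_twist k d B i))"
proof -
  have dim: "frob_dim k d B n = (\<Sum>i\<in>I. of_nat ((d i)\<^sup>2) * inverse (\<mu> i) * \<mu> i ^ n)
    + (\<Sum>i\<in>{1..k} - I. of_nat (d i) * 0 ^ n * mtrace (frob_twist k d B i))" for n
    by (rule frob_dim_split[OF I traceless]) (use scalar in blast)
  show "frob_dim k d B 1 = of_nat (\<Sum>i\<in>I. (d i)\<^sup>2)"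
    unfolding dim[of 1] of_nat_sum by (simp, intro sum.cong refl) (simp add: scalar mult.assoc)
  show "\<forall>j\<ge>1. frob_dim k d B j = (\<Sum>i\<in>I. of_nat ((d i)\<^sup>2) * inverse (\<mu> i) * \<mu> i ^ j)"
    by (auto simp: dim zero_power)
  show "frob_dim k d B 0 = (\<Sum>i\<in>I. of_nat ((d i)\<^sup>2) * inverse (\<mu> i))
      + (\<Sum>i\<in>{1..k} - I. of_nat (d i) * mtrace (frob_twist k d B i))"
    by (simp add: dim)
qed

end

theorem mainTheorem5:
  fixes k :: nat and d :: "nat \<Rightarrow> nat"
    and B :: "(nat \<Rightarrow> 'a::field_char_0 mat) \<Rightarrow> (nat \<Rightarrow> 'a mat) \<Rightarrow> 'a"
  assumes dpos: "\<forall>i\<in>{1..k}. 0 < d i"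
    and frob: "frobenius_form k d B"
    and ws: "weakly_symmetric k d B"
  shows "\<exists>I u v \<mu>. I \<subseteq> {1..k} \<and> (\<forall>i\<in>{1..k}. d i = 1 \<longrightarrow> i \<in> I) \<and>
           u \<in> dsA k d \<and> v \<in> dsA k d \<and>
           dsMult k u v = dsOne k d \<and> dsMult k v u = dsOne k d \<and>
           (\<forall>a\<in>dsA k d. \<forall>b\<in>dsA k d. B a b = eps0 k d (dsMult k u (dsMult k a b))) \<and>
           (\<forall>i\<in>{1..k} - I. mtrace (v i) = 0) \<and>
           (\<forall>i\<in>I. \<mu> i \<noteq> 0 \<and> u i = inverse (\<mu> i) \<cdot>\<^sub>m 1\<^sub>m (d i)) \<and>
           frob_dim k d B 1 = of_nat (\<Sum>i\<in>I. (d i)\<^sup>2) \<and>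
           (\<Sum>i\<in>I. (d i)\<^sup>2) \<le> (\<Sum>i\<in>{1..k}. (d i)\<^sup>2) \<and>
           (\<forall>j\<ge>1. frob_dim k d B j = (\<Sum>i\<in>I. of_nat ((d i)\<^sup>2) * inverse (\<mu> i) * \<mu> i ^ j)) \<and>
           frob_dim k d B 0 = (\<Sum>i\<in>I. of_nat ((d i)\<^sup>2) * inverse (\<mu> i))
                              + (\<Sum>i\<in>{1..k} - I. of_nat (d i) * mtrace (u i))"
proof -
  let ?u = "frob_twist k d B" and ?v = "frob_twist_inv k d B"
  define I where "I = {i\<in>{1..k}. mtrace (?v i) \<noteq> 0}"
  have I: "I \<subseteq> {1..k}" and traceless: "\<forall>i\<in>{1..k} - I. mtrace (?v i) = 0"
    by (auto simp: I_def)
  have "\<forall>i\<in>I. \<exists>c. c \<noteq> 0 \<and> ?u i = inverse c \<cdot>\<^sub>m 1\<^sub>m (d i) \<and> ?v i = c \<cdot>\<^sub>m 1\<^sub>m (d i)"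
    using weakly_symmetric_twist_block_scalar[OF dpos frob ws] by (auto simp: I_def)
  then obtain \<mu> where scalar: "\<forall>i\<in>I. \<mu> i \<noteq> 0 \<and> ?u i = inverse (\<mu> i) \<cdot>\<^sub>m 1\<^sub>m (d i) \<and> ?v i = \<mu> i \<cdot>\<^sub>m 1\<^sub>m (d i)"
    by (metis bchoice)
  have "\<forall>i\<in>{1..k}. d i = 1 \<longrightarrow> i \<in> I"
    using frob_twist_inv_trace_nonzero_if_dim_one[OF dpos frob] by (auto simp: I_def)
  moreover have "\<forall>a\<in>dsA k d. \<forall>b\<in>dsA k d. B a b = eps0 k d (dsMult k ?u (dsMult k a b))"
    using frob_eq_eps0_twist[OF dpos frob] by blast
  moreover have "(\<Sum>i\<in>I. (d i)\<^sup>2) \<le> (\<Sum>i\<in>{1..k}. (d i)\<^sup>2)"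
    by (rule sum_mono2[OF finite_atLeastAtMost I]) simp
  moreover have "\<forall>i\<in>I. \<mu> i \<noteq> 0 \<and> ?u i = inverse (\<mu> i) \<cdot>\<^sub>m 1\<^sub>m (d i)"
    using scalar by blast
  moreover note I traceless frob_dims_of_scalar_blocks[OF dpos frob I traceless scalar]
    frob_twist_closed[OF dpos frob] frob_twist_inv_closed[OF dpos frob]
    frob_twist_mult_inv[OF dpos frob] frob_twist_inv_mult[OF dpos frob]
  ultimately show ?thesis
    by - (rule exI[of _ I], rule exI[of _ ?u], rule exI[of _ ?v], rule exI[of _ \<mu>], intro conjI; assumption)
qed

end
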